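(* Let $\Pi$ be a tight $\mathrm{LP}^{\mathrm{MLN}}$ program such that $\mathrm{SM}'[\Pi]$ is not empty. Then $\Pi$ (under the $\mathrm{LP}^{\mathrm{MLN}}$ semantics) and its completion $\mathit{Comp}(\Pi)$ (under the MLN semantics) have the same probability distribution over all interpretations, i.e. $P_\Pi(I)=P_{\mathit{Comp}(\Pi)}(I)$ for every interpretation $I$.
   Context: Signature $\sigma$ with no function constants of positive arity; interpretations are sets of ground atoms. A formula is negative if every occurrence of every atom is in the scope of negation. A rule has the form $A\leftarrow B\wedge N$ ($A$ a possibly empty disjunction of atoms $A_1\vee\dots\vee A_k$, $B$ a conjunction of atoms, $N$ a negative formula; $B\wedge N$ is its body), identified with $B\wedge N\rightarrow A$. For a ground program $\Pi$, the reduct $\Pi^I$ consists of $A\leftarrow B$ for rules $A\leftarrow B\wedge N$ with $I\models N$; $I$ is a stable model of $\Pi$ if it is a minimal model of $\Pi^I$. An $\mathrm{LP}^{\mathrm{MLN}}$ program $\Pi$ is a finite set of weighted rules $w:R$ ($w$ real, soft, or the symbol $\alpha$, hard), identified with its ground instance. $\overline{\Pi}$ drops weights; $\Pi_I=\{w:R\in\Pi\mid I\models R\}$; $\Pi^{\rm hard},\Pi^{\rm soft}$ are its hard and soft rules. $\mathrm{SM}[\Pi]=\{I\mid I$ stable model of $\overline{\Pi_I}\}$; $W_\Pi(I)=\exp(\sum_{w:R\in\Pi_I}w)$ if $I\in\mathrm{SM}[\Pi]$, else $0$; $P_\Pi(I)=\lim_{\alpha\to\infty}W_\Pi(I)/\sum_{J\in\mathrm{SM}[\Pi]}W_\Pi(J)$.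 $\mathrm{SM}'[\Pi]$ is the set of $I$ that are stable models of $\overline{\Pi_I}$ and satisfy $\overline{\Pi^{\rm hard}}$. $\Pi$ is tight if the positive dependency graph of $\overline{\Pi}$ (vertices: ground atoms; an edge from each atom in $A$ to each atom in $B$ for every rule $A\leftarrow B\wedge N$) is acyclic. An MLN is a finite set of weighted formulas $w:F$ ($w$ real or $\alpha$); $W_{\mathbb{L}}(I)=\exp(\sum w)$ over the formulas of $\mathbb{L}$ satisfied by $I$, and $P_{\mathbb{L}}(I)=\lim_{\alpha\to\infty}W_{\mathbb{L}}(I)/\sum_J W_{\mathbb{L}}(J)$ over all interpretations $J$. $\mathit{Comp}(\Pi)$ is the MLN consisting of all $w:R$ in $\Pi$ (with $R$ read as the formula $B\wedge N\rightarrow A$) together with, for each ground atom $A$, the hard formula $\alpha:\ A\rightarrow\bigvee (\mathit{Body}\wedge\bigwedge_{A'\in\{A_1,\dots,A_k\}\setminus\{A\}}\neg A')$, the disjunction ranging over all rules $w: A_1\vee\dots\vee A_k\leftarrow\mathit{Body}$ in $\Pi$ with $A\in\{A_1,\dots,A_k\}$. *)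

theory Defs
  imports Complex_Main "HOL-Library.Multiset"
begin

datatype 'a formula =
    Atom 'a | Top | Bot
  | Neg "'a formula"
  | Conj "'a formula" "'a formula"
  | Disj "'a formula" "'a formula"
  | Impl "'a formula" "'a formula"

fun sat :: "'a set \<Rightarrow> 'a formula \<Rightarrow> bool" where
  "sat I (Atom a) = (a \<in> I)"
| "sat I Top = True"
| "sat I Bot = False"
| "sat I (Neg F) = (\<not> sat I F)"
| "sat I (Conj F G) = (sat I F \<and> sat I G)"
| "sat I (Disj F G) = (sat I F \<or> sat I G)"
| "sat I (Impl F G) = (sat I F \<longrightarrow> sat I G)"

fun unnegated_atoms :: "'a formula \<Rightarrow> 'a set" where
  "unnegated_atoms (Atom a) = {a}"
| "unnegated_atoms Top = {}"
| "unnegated_atoms Bot = {}"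
| "unnegated_atoms (Neg F) = {}"
| "unnegated_atoms (Conj F G) = unnegated_atoms F \<union> unnegated_atoms G"
| "unnegated_atoms (Disj F G) = unnegated_atoms F \<union> unnegated_atoms G"
| "unnegated_atoms (Impl F G) = unnegated_atoms F \<union> unnegated_atoms G"

definition negative :: "'a formula \<Rightarrow> bool" where
  "negative F \<longleftrightarrow> unnegated_atoms F = {}"

definition BigConj :: "'a formula list \<Rightarrow> 'a formula" where
  "BigConj Fs = foldr Conj Fs Top"

definition BigDisj :: "'a formula list \<Rightarrow> 'a formula" where
  "BigDisj Fs = foldr Disj Fs Bot"

text \<open>Some enumeration of a finite set (the order is irrelevant semantically).\<close>
definition enum_set :: "'b set \<Rightarrow> 'b list" where
  "enum_set S = (SOME xs. set xs = S \<and> distinct xs)"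

text \<open>A rule  A1 \<or> ... \<or> Ak \<leftarrow> B \<and> N : head atoms, positive body atoms, negative formula N.\<close>
datatype 'a rule = Rule (head: "'a list") (pbody: "'a list") (nbody: "'a formula")

definition body_formula :: "'a rule \<Rightarrow> 'a formula" where
  "body_formula R = Conj (BigConj (map Atom (pbody R))) (nbody R)"

definition rule_formula :: "'a rule \<Rightarrow> 'a formula" where
  "rule_formula R = Impl (body_formula R) (BigDisj (map Atom (head R)))"

definition rule_sat :: "'a set \<Rightarrow> 'a rule \<Rightarrow> bool" where
  "rule_sat I R \<longleftrightarrow> sat I (rule_formula R)"

text \<open>Positive (reduct) rules: head atoms and body atoms.\<close>
definition pos_rule_sat :: "'a set \<Rightarrow> 'a list \<times> 'a list \<Rightarrow> bool" where
  "pos_rule_sat J r \<longleftrightarrow> (set (snd r) \<subseteq> J \<longrightarrow> (\<exists>a\<in>set (fst r). a \<in> J))"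

definition reduct :: "'a rule set \<Rightarrow> 'a set \<Rightarrow> ('a list \<times> 'a list) set" where
  "reduct P I = {(head R, pbody R) | R. R \<in> P \<and> sat I (nbody R)}"

definition stable_model :: "'a rule set \<Rightarrow> 'a set \<Rightarrow> bool" where
  "stable_model P I \<longleftrightarrow>
     (\<forall>r\<in>reduct P I. pos_rule_sat I r) \<and>
     (\<forall>J. J \<subset> I \<longrightarrow> \<not> (\<forall>r\<in>reduct P I. pos_rule_sat J r))"

datatype weight = Soft real | Hard

fun wval :: "real \<Rightarrow> weight \<Rightarrow> real" where
  "wval \<alpha> (Soft r) = r"
| "wval \<alpha> Hard = \<alpha>"

type_synonym 'a lpmln = "(weight \<times> 'a rule) set"

definition lpmln_program :: "'a lpmln \<Rightarrow> bool" where
  "lpmln_program \<Pi> \<longleftrightarrow> finite \<Pi> \<and> (\<forall>(w, R)\<in>\<Pi>. negative (nbody R))"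

definition unweighted :: "'a lpmln \<Rightarrow> 'a rule set" where
  "unweighted \<Pi> = snd ` \<Pi>"

definition sat_part :: "'a lpmln \<Rightarrow> 'a set \<Rightarrow> 'a lpmln" where
  "sat_part \<Pi> I = {(w, R) \<in> \<Pi>. rule_sat I R}"

definition hard_part :: "'a lpmln \<Rightarrow> 'a lpmln" where
  "hard_part \<Pi> = {(w, R) \<in> \<Pi>. w = Hard}"

definition SM :: "'a lpmln \<Rightarrow> 'a set set" where
  "SM \<Pi> = {I. stable_model (unweighted (sat_part \<Pi> I)) I}"

definition SM' :: "'a lpmln \<Rightarrow> 'a set set" where
  "SM' \<Pi> = {I. stable_model (unweighted (sat_part \<Pi> I)) I \<and>
               (\<forall>R\<in>unweighted (hard_part \<Pi>). rule_sat I R)}"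

definition W_lpmln :: "'a lpmln \<Rightarrow> real \<Rightarrow> 'a set \<Rightarrow> real" where
  "W_lpmln \<Pi> \<alpha> I =
     (if I \<in> SM \<Pi> then exp (\<Sum>(w, R)\<in>sat_part \<Pi> I. wval \<alpha> w) else 0)"

definition P_lpmln :: "'a lpmln \<Rightarrow> 'a set \<Rightarrow> real" where
  "P_lpmln \<Pi> I = Lim at_top (\<lambda>\<alpha>. W_lpmln \<Pi> \<alpha> I / (\<Sum>J\<in>SM \<Pi>. W_lpmln \<Pi> \<alpha> J))"

definition tight :: "'a lpmln \<Rightarrow> bool" where
  "tight \<Pi> \<longleftrightarrow> acyclic {(a, b). \<exists>R\<in>unweighted \<Pi>. a \<in> set (head R) \<and> b \<in> set (pbody R)}"

type_synonym 'a mln = "(weight \<times> 'a formula) multiset"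

definition W_mln :: "'a mln \<Rightarrow> real \<Rightarrow> 'a set \<Rightarrow> real" where
  "W_mln L \<alpha> I = exp (\<Sum>\<^sub># (image_mset (\<lambda>(w, F). wval \<alpha> w) (filter_mset (\<lambda>(w, F). sat I F) L)))"

definition P_mln :: "'a mln \<Rightarrow> 'a set \<Rightarrow> real" where
  "P_mln L I = Lim at_top (\<lambda>\<alpha>. W_mln L \<alpha> I / (\<Sum>J\<in>(UNIV :: 'a set set). W_mln L \<alpha> J))"

definition completion_formula :: "'a lpmln \<Rightarrow> 'a \<Rightarrow> 'a formula" where
  "completion_formula \<Pi> a =
     Impl (Atom a)
       (BigDisj (map (\<lambda>(w, R). Conj (body_formula R)
                                    (BigConj (map (\<lambda>a'. Neg (Atom a')) (filter (\<lambda>a'. a' \<noteq> a) (head R)))))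
                     (enum_set {(w, R) \<in> \<Pi>. a \<in> set (head R)})))"

definition Comp :: "'a lpmln \<Rightarrow> 'a mln" where
  "Comp \<Pi> = image_mset (\<lambda>(w, R). (w, rule_formula R)) (mset_set \<Pi>)
           + image_mset (\<lambda>a. (Hard, completion_formula \<Pi> a)) (mset_set UNIV)"

end

theory Submission
  imports Defs
begin

text \<open>
  For a tight program, stable models of the program's satisfied part coincide with supported
  models (Fages), and an interpretation is supported iff it satisfies every completion formula.
  Writing \<open>h I\<close> for the number of hard rules satisfied by \<open>I\<close> and \<open>k I\<close> for the number
  of completion formulas it satisfies, the LPMLN weight of a stable model is
  \<open>exp (soft + h \<alpha>)\<close> and its MLN weight under the completion is \<open>exp (soft + (h + k) \<alpha>)\<close>.
  As \<open>\<alpha> \<rightarrow> \<infinity>\<close> both distributions concentrate on the interpretations maximizing the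
  coefficient of \<open>\<alpha>\<close>; since \<open>SM'\<close> is nonempty these are, in both cases, exactly the elements
  of \<open>SM'\<close>, and both limits are the soft weight of \<open>I\<close> normalized over \<open>SM'\<close>.
\<close>

lemma sat_BigConj: "sat I (BigConj Fs) \<longleftrightarrow> (\<forall>F\<in>set Fs. sat I F)"
  unfolding BigConj_def by (induction Fs) auto

lemma sat_BigDisj: "sat I (BigDisj Fs) \<longleftrightarrow> (\<exists>F\<in>set Fs. sat I F)"
  unfolding BigDisj_def by (induction Fs) auto

lemma set_enum_set: "finite S \<Longrightarrow> set (enum_set S) = S"
  unfolding enum_set_def by (metis (mono_tags, lifting) finite_distinct_list someI_ex)

lemma sat_body_formula: "sat I (body_formula R) \<longleftrightarrow> set (pbody R) \<subseteq> I \<and> sat I (nbody R)"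
  unfolding body_formula_def by (auto simp: sat_BigConj)

lemma rule_sat_iff:
  "rule_sat I R \<longleftrightarrow> (set (pbody R) \<subseteq> I \<and> sat I (nbody R) \<longrightarrow> (\<exists>a\<in>set (head R). a \<in> I))"
  unfolding rule_sat_def rule_formula_def by (auto simp: sat_body_formula sat_BigDisj)

definition supported :: "'a lpmln \<Rightarrow> 'a set \<Rightarrow> 'a \<Rightarrow> bool" where
  "supported \<Pi> I a \<longleftrightarrow> (\<exists>(w, R)\<in>\<Pi>. a \<in> set (head R) \<and> set (pbody R) \<subseteq> I \<and> sat I (nbody R) \<and>
      (\<forall>a'\<in>set (head R). a' \<noteq> a \<longrightarrow> a' \<notin> I))"

lemma sat_completion_formula_iff:
  assumes "finite \<Pi>"
  shows "sat I (completion_formula \<Pi> a) \<longleftrightarrow> (a \<in> I \<longrightarrow> supported \<Pi> I a)"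
proof -
  have "finite {(w, R) \<in> \<Pi>. a \<in> set (head R)}"
    using assms by (auto intro: finite_subset)
  then show ?thesis
    unfolding completion_formula_def supported_def
    by (auto simp: sat_BigDisj sat_BigConj sat_body_formula set_enum_set)
qed

definition positive_dependency :: "'a lpmln \<Rightarrow> 'a rel" where
  "positive_dependency \<Pi> = {(a, b). \<exists>R\<in>unweighted \<Pi>. a \<in> set (head R) \<and> b \<in> set (pbody R)}"

lemma finite_positive_dependency:
  assumes "finite \<Pi>"
  shows "finite (positive_dependency \<Pi>)"
proof (rule finite_subset)
  show "positive_dependency \<Pi> \<subseteq> (\<Union>R\<in>unweighted \<Pi>. set (head R) \<times> set (pbody R))"
    unfolding positive_dependency_def by blast
  show "finite (\<Union>R\<in>unweighted \<Pi>. set (head R) \<times> set (pbody R))"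
    using assms unfolding unweighted_def by simp
qed

lemma reduct_memI:
  "(w, R) \<in> \<Pi> \<Longrightarrow> rule_sat I R \<Longrightarrow> sat I (nbody R) \<Longrightarrow>
    (head R, pbody R) \<in> reduct (unweighted (sat_part \<Pi> I)) I"
  unfolding reduct_def unweighted_def sat_part_def by force

lemma reduct_memE:
  assumes "r \<in> reduct (unweighted (sat_part \<Pi> I)) I"
  obtains w R where "r = (head R, pbody R)" "(w, R) \<in> \<Pi>" "rule_sat I R" "sat I (nbody R)"
  using assms unfolding reduct_def unweighted_def sat_part_def by auto

lemma pos_rule_sat_reduct_sat_part: "\<forall>r\<in>reduct (unweighted (sat_part \<Pi> I)) I. pos_rule_sat I r"
proof
  fix r
  assume "r \<in> reduct (unweighted (sat_part \<Pi> I)) I"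
  then obtain w R where "r = (head R, pbody R)" "(w, R) \<in> \<Pi>" "rule_sat I R" "sat I (nbody R)"
    by (rule reduct_memE)
  then show "pos_rule_sat I r"
    by (simp add: pos_rule_sat_def rule_sat_iff)
qed

lemma stable_model_imp_supported:
  assumes stable: "stable_model (unweighted (sat_part \<Pi> I)) I" and "a \<in> I"
  shows "supported \<Pi> I a"
proof (rule ccontr)
  assume unsupported: "\<not> supported \<Pi> I a"
  have "pos_rule_sat (I - {a}) r" if r_reduct: "r \<in> reduct (unweighted (sat_part \<Pi> I)) I" for r
  proof -
    obtain w R where r: "r = (head R, pbody R)" and "(w, R) \<in> \<Pi>" "rule_sat I R" "sat I (nbody R)"
      using r_reduct by (rule reduct_memE)
    moreover have "\<not> (\<forall>a'\<in>set (head R). a' \<notin> I - {a})" if "set (pbody R) \<subseteq> I - {a}"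
      using that unsupported \<open>(w, R) \<in> \<Pi>\<close> \<open>rule_sat I R\<close> \<open>sat I (nbody R)\<close>
      unfolding supported_def rule_sat_iff by blast
    ultimately show ?thesis
      unfolding pos_rule_sat_def by auto
  qed
  moreover have "I - {a} \<subset> I"
    using \<open>a \<in> I\<close> by auto
  ultimately show False
    using stable unfolding stable_model_def by blast
qed

text \<open>
  A smaller model of the reduct would miss an atom that is minimal for the (well-founded)
  positive dependency relation; the rule supporting it has its positive body inside the smaller
  model, so the smaller model must contain another head atom of that rule, which is not in \<open>I\<close>.
\<close>
lemma supported_imp_stable_model:
  assumes "finite \<Pi>" "tight \<Pi>" and supp: "\<forall>a\<in>I. supported \<Pi> I a"
  shows "stable_model (unweighted (sat_part \<Pi> I)) I"
proof -
  let ?P = "unweighted (sat_part \<Pi> I)"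
  have "\<not> (\<forall>r\<in>reduct ?P I. pos_rule_sat J r)" if "J \<subset> I" for J
  proof
    assume J_model: "\<forall>r\<in>reduct ?P I. pos_rule_sat J r"
    have "wf ((positive_dependency \<Pi>)\<inverse>)"
      using assms by (simp add: finite_acyclic_wf_converse finite_positive_dependency
          tight_def flip: positive_dependency_def)
    moreover obtain x where "x \<in> I - J"
      using \<open>J \<subset> I\<close> by auto
    ultimately obtain a where a: "a \<in> I - J"
      and minimal: "\<And>b. (a, b) \<in> positive_dependency \<Pi> \<Longrightarrow> b \<notin> I - J"
      by (rule wfE_min) blast
    obtain w R where R: "(w, R) \<in> \<Pi>" "a \<in> set (head R)" "set (pbody R) \<subseteq> I" "sat I (nbody R)"
      and others_false: "\<forall>a'\<in>set (head R). a' \<noteq> a \<longrightarrow> a' \<notin> I"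
      using supp a unfolding supported_def by blast
    have "R \<in> unweighted \<Pi>"
      using R(1) unfolding unweighted_def by force
    then have "set (pbody R) \<subseteq> J"
      using R(2,3) minimal unfolding positive_dependency_def by blast
    moreover have "(head R, pbody R) \<in> reduct ?P I"
      using R a by (intro reduct_memI) (auto simp: rule_sat_iff)
    ultimately obtain c where "c \<in> set (head R)" "c \<in> J"
      using J_model unfolding pos_rule_sat_def by fastforce
    then show False
      using others_false a \<open>J \<subset> I\<close> by auto
  qed
  with pos_rule_sat_reduct_sat_part show ?thesis
    unfolding stable_model_def by blast
qed

lemma SM_tight_iff:
  assumes "finite \<Pi>" "tight \<Pi>"
  shows "I \<in> SM \<Pi> \<longleftrightarrow> (\<forall>a. sat I (completion_formula \<Pi> a))"
proof -
  have "I \<in> SM \<Pi> \<longleftrightarrow> (\<forall>a\<in>I. supported \<Pi> I a)"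
    using stable_model_imp_supported supported_imp_stable_model[OF assms]
    unfolding SM_def by auto
  then show ?thesis
    by (simp add: sat_completion_formula_iff[OF assms(1)] Ball_def)
qed

definition soft_weight :: "'a lpmln \<Rightarrow> real" where
  "soft_weight X = (\<Sum>x\<in>X. wval 0 (fst x))"

lemma finite_sat_part: "finite \<Pi> \<Longrightarrow> finite (sat_part \<Pi> I)"
  by (rule finite_subset[of _ \<Pi>]) (auto simp: sat_part_def)

lemma hard_part_eq: "hard_part X = X \<inter> {x. fst x = Hard}"
  unfolding hard_part_def by auto

lemma sum_wval_eq_soft_weight:
  assumes "finite X"
  shows "(\<Sum>x\<in>X. wval \<alpha> (fst x)) = soft_weight X + real (card (hard_part X)) * \<alpha>"
proof -
  have "wval \<alpha> w = wval 0 w + (if w = Hard then \<alpha> else 0)" for w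
    by (cases w) auto
  then have "(\<Sum>x\<in>X. wval \<alpha> (fst x)) = soft_weight X + (\<Sum>x\<in>X. if fst x = Hard then \<alpha> else 0)"
    by (simp add: soft_weight_def sum.distrib)
  also have "(\<Sum>x\<in>X. if fst x = Hard then \<alpha> else 0) = real (card (hard_part X)) * \<alpha>"
    using assms by (simp add: sum.If_cases hard_part_eq)
  finally show ?thesis .
qed

lemma W_lpmln_eq:
  assumes "finite \<Pi>"
  shows "W_lpmln \<Pi> \<alpha> I = (if I \<in> SM \<Pi>
    then exp (soft_weight (sat_part \<Pi> I) + real (card (hard_part (sat_part \<Pi> I))) * \<alpha>) else 0)"
  using assms by (simp add: W_lpmln_def split_def sum_wval_eq_soft_weight finite_sat_part)

lemma W_mln_plus: "W_mln (L + M) \<alpha> I = W_mln L \<alpha> I * W_mln M \<alpha> I"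
  by (simp add: W_mln_def exp_add)

lemma W_mln_image_mset_set:
  assumes "finite X"
  shows "W_mln (image_mset f (mset_set X)) \<alpha> I =
    exp (\<Sum>x\<in>{x \<in> X. sat I (snd (f x))}. wval \<alpha> (fst (f x)))"
  using assms by (simp add: W_mln_def filter_mset_image_mset sum_unfold_sum_mset
      multiset.map_comp o_def case_prod_beta)

lemma W_mln_Comp:
  fixes \<Pi> :: "('a::finite) lpmln"
  assumes "finite \<Pi>"
  shows "W_mln (Comp \<Pi>) \<alpha> I = exp (soft_weight (sat_part \<Pi> I) +
    (real (card (hard_part (sat_part \<Pi> I))) + real (card {a. sat I (completion_formula \<Pi> a)})) * \<alpha>)"
proof -
  have "{x \<in> \<Pi>. sat I (rule_formula (snd x))} = sat_part \<Pi> I"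
    by (auto simp: sat_part_def rule_sat_def)
  then have "W_mln (image_mset (\<lambda>(w, R). (w, rule_formula R)) (mset_set \<Pi>)) \<alpha> I =
      exp (soft_weight (sat_part \<Pi> I) + real (card (hard_part (sat_part \<Pi> I))) * \<alpha>)"
    using assms by (simp add: W_mln_image_mset_set case_prod_beta sum_wval_eq_soft_weight finite_sat_part)
  moreover have "W_mln (image_mset (\<lambda>a. (Hard, completion_formula \<Pi> a)) (mset_set UNIV)) \<alpha> I =
      exp (real (card {a. sat I (completion_formula \<Pi> a)}) * \<alpha>)"
    by (simp add: W_mln_image_mset_set)
  ultimately show ?thesis
    by (simp add: Comp_def W_mln_plus algebra_simps flip: exp_add)
qed

lemma tendsto_exp_linear_at_top:
  fixes k s :: real
  assumes "k \<le> 0"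
  shows "((\<lambda>\<alpha>. exp (s + k * \<alpha>)) \<longlongrightarrow> (if k = 0 then exp s else 0)) at_top"
proof (cases "k = 0")
  case False
  with assms have "filterlim (\<lambda>\<alpha>. k * \<alpha>) at_bot at_top"
    by (intro filterlim_cmult_at_bot_at_top[OF filterlim_ident]) auto
  then have "filterlim (\<lambda>\<alpha>. s + k * \<alpha>) at_bot at_top"
    using filterlim_tendsto_add_at_bot_iff[OF tendsto_const] by blast
  with False show ?thesis
    using exp_at_bot filterlim_compose by fastforce
qed simp

lemma tendsto_exp_weight_ratio_at_top:
  fixes c d :: "'b \<Rightarrow> real"
  assumes "finite S" "\<And>J. J \<in> S \<Longrightarrow> d J \<le> D" "J\<^sub>0 \<in> S" "d J\<^sub>0 = D"
  shows "((\<lambda>\<alpha>. (if I \<in> S then exp (c I + d I * \<alpha>) else 0) / (\<Sum>J\<in>S. exp (c J + d J * \<alpha>)))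
    \<longlongrightarrow> (if I \<in> {J \<in> S. d J = D} then exp (c I) else 0) / (\<Sum>J\<in>{J \<in> S. d J = D}. exp (c J))) at_top"
proof -
  define M where "M = {J \<in> S. d J = D}"
  define e where "e J \<alpha> = exp (c J + (d J - D) * \<alpha>)" for J \<alpha>
  have "exp (c J + d J * \<alpha>) = exp (D * \<alpha>) * e J \<alpha>" for J \<alpha>
    by (simp add: e_def algebra_simps flip: exp_add)
  then have ratio: "(if I \<in> S then exp (c I + d I * \<alpha>) else 0) / (\<Sum>J\<in>S. exp (c J + d J * \<alpha>)) =
      (if I \<in> S then e I \<alpha> else 0) / (\<Sum>J\<in>S. e J \<alpha>)" for \<alpha>
    by (simp flip: sum_distrib_left)
  have e_lim: "(e J \<longlongrightarrow> (if J \<in> M then exp (c J) else 0)) at_top" if "J \<in> S" for J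
    using tendsto_exp_linear_at_top[of "d J - D" "c J"] assms(2)[OF that] that
    unfolding e_def M_def by simp
  have "((\<lambda>\<alpha>. if I \<in> S then e I \<alpha> else 0) \<longlongrightarrow> (if I \<in> M then exp (c I) else 0)) at_top"
    using e_lim[of I] by (cases "I \<in> S") (auto simp: M_def)
  moreover have "((\<lambda>\<alpha>. \<Sum>J\<in>S. e J \<alpha>) \<longlongrightarrow> (\<Sum>J\<in>S. if J \<in> M then exp (c J) else 0)) at_top"
    by (intro tendsto_sum e_lim)
  then have "((\<lambda>\<alpha>. \<Sum>J\<in>S. e J \<alpha>) \<longlongrightarrow> (\<Sum>J\<in>M. exp (c J))) at_top"
    using assms(1) by (simp add: sum.If_cases M_def Int_def conj_commute)
  moreover have "(\<Sum>J\<in>M. exp (c J)) > 0"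
    using assms by (intro sum_pos) (auto simp: M_def)
  ultimately have "((\<lambda>\<alpha>. (if I \<in> S then e I \<alpha> else 0) / (\<Sum>J\<in>S. e J \<alpha>))
      \<longlongrightarrow> (if I \<in> M then exp (c I) else 0) / (\<Sum>J\<in>M. exp (c J))) at_top"
    by (intro tendsto_divide) auto
  then show ?thesis
    unfolding ratio M_def .
qed

definition P_soft :: "'a lpmln \<Rightarrow> 'a set \<Rightarrow> real" where
  "P_soft \<Pi> I = (if I \<in> SM' \<Pi> then exp (soft_weight (sat_part \<Pi> I)) else 0) /
    (\<Sum>J\<in>SM' \<Pi>. exp (soft_weight (sat_part \<Pi> J)))"

lemma hard_part_sat_part_subset: "hard_part (sat_part \<Pi> I) \<subseteq> hard_part \<Pi>"
  by (auto simp: hard_part_def sat_part_def)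

lemma card_hard_part_sat_part_le:
  "finite \<Pi> \<Longrightarrow> card (hard_part (sat_part \<Pi> I)) \<le> card (hard_part \<Pi>)"
  by (rule card_mono[OF _ hard_part_sat_part_subset]) (simp add: hard_part_eq)

lemma SM'_iff_card_hard_part:
  assumes "finite \<Pi>"
  shows "I \<in> SM' \<Pi> \<longleftrightarrow> I \<in> SM \<Pi> \<and> card (hard_part (sat_part \<Pi> I)) = card (hard_part \<Pi>)"
proof -
  have "finite (hard_part \<Pi>)"
    using assms by (simp add: hard_part_eq)
  then have "card (hard_part (sat_part \<Pi> I)) = card (hard_part \<Pi>) \<longleftrightarrow>
      hard_part (sat_part \<Pi> I) = hard_part \<Pi>"
    using hard_part_sat_part_subset card_subset_eq by metis
  also have "\<dots> \<longleftrightarrow> (\<forall>R\<in>unweighted (hard_part \<Pi>). rule_sat I R)"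
    by (auto simp: hard_part_def sat_part_def unweighted_def)
  finally show ?thesis
    by (simp add: SM'_def SM_def)
qed

lemma P_lpmln_eq_P_soft:
  fixes \<Pi> :: "('a::finite) lpmln"
  assumes "finite \<Pi>" "SM' \<Pi> \<noteq> {}"
  shows "P_lpmln \<Pi> I = P_soft \<Pi> I"
proof -
  let ?c = "\<lambda>J. soft_weight (sat_part \<Pi> J)"
  let ?h = "\<lambda>J. real (card (hard_part (sat_part \<Pi> J)))"
  let ?H = "real (card (hard_part \<Pi>))"
  obtain J\<^sub>0 where "J\<^sub>0 \<in> SM' \<Pi>"
    using assms(2) by blast
  have max: "{J \<in> SM \<Pi>. ?h J = ?H} = SM' \<Pi>"
    using SM'_iff_card_hard_part[OF assms(1)] by auto
  have "((\<lambda>\<alpha>. (if I \<in> SM \<Pi> then exp (?c I + ?h I * \<alpha>) else 0) /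
      (\<Sum>J\<in>SM \<Pi>. exp (?c J + ?h J * \<alpha>))) \<longlongrightarrow> P_soft \<Pi> I) at_top"
    unfolding P_soft_def max[symmetric]
    by (rule tendsto_exp_weight_ratio_at_top[where J\<^sub>0 = J\<^sub>0])
      (use \<open>J\<^sub>0 \<in> SM' \<Pi>\<close> max card_hard_part_sat_part_le[OF assms(1)] in auto)
  moreover have "W_lpmln \<Pi> \<alpha> I / (\<Sum>J\<in>SM \<Pi>. W_lpmln \<Pi> \<alpha> J) =
      (if I \<in> SM \<Pi> then exp (?c I + ?h I * \<alpha>) else 0) / (\<Sum>J\<in>SM \<Pi>. exp (?c J + ?h J * \<alpha>))" for \<alpha>
    using assms(1) by (simp add: W_lpmln_eq cong: sum.cong)
  ultimately show ?thesis
    unfolding P_lpmln_def by (simp add: tendsto_Lim)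
qed

lemma P_mln_Comp_eq_P_soft:
  fixes \<Pi> :: "('a::finite) lpmln"
  assumes "finite \<Pi>" "tight \<Pi>" "SM' \<Pi> \<noteq> {}"
  shows "P_mln (Comp \<Pi>) I = P_soft \<Pi> I"
proof -
  let ?c = "\<lambda>J. soft_weight (sat_part \<Pi> J)"
  let ?h = "\<lambda>J. real (card (hard_part (sat_part \<Pi> J)))"
  let ?H = "real (card (hard_part \<Pi>))"
  let ?k = "\<lambda>J. real (card {a. sat J (completion_formula \<Pi> a)})"
  let ?n = "real (card (UNIV :: 'a set))"
  obtain J\<^sub>0 where "J\<^sub>0 \<in> SM' \<Pi>"
    using assms(3) by blast
  have k_le: "?k J \<le> ?n" for J
    by (simp add: card_mono)
  have k_max: "?k J = ?n \<longleftrightarrow> J \<in> SM \<Pi>" for J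
  proof -
    have "?k J = ?n \<longleftrightarrow> {a. sat J (completion_formula \<Pi> a)} = UNIV"
      by (metis card_subset_eq finite of_nat_eq_iff subset_UNIV)
    then show ?thesis
      using SM_tight_iff[OF assms(1,2)] by auto
  qed
  have "?h J + ?k J = ?H + ?n \<longleftrightarrow> ?h J = ?H \<and> ?k J = ?n" for J
    using card_hard_part_sat_part_le[OF assms(1), of J] k_le[of J] by linarith
  then have max: "{J \<in> UNIV. ?h J + ?k J = ?H + ?n} = SM' \<Pi>"
    using k_max SM'_iff_card_hard_part[OF assms(1)] by auto
  have "((\<lambda>\<alpha>. (if I \<in> UNIV then exp (?c I + (?h I + ?k I) * \<alpha>) else 0) /
      (\<Sum>J\<in>UNIV. exp (?c J + (?h J + ?k J) * \<alpha>))) \<longlongrightarrow> P_soft \<Pi> I) at_top"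
    unfolding P_soft_def max[symmetric]
    by (rule tendsto_exp_weight_ratio_at_top[where J\<^sub>0 = J\<^sub>0])
      (use \<open>J\<^sub>0 \<in> SM' \<Pi>\<close> max card_hard_part_sat_part_le[OF assms(1)] k_le in
        \<open>auto intro!: add_mono\<close>)
  then show ?thesis
    unfolding P_mln_def W_mln_Comp[OF assms(1)] by (simp add: tendsto_Lim)
qed

theorem theorem3:
  fixes \<Pi> :: "('a::finite) lpmln" and I :: "'a set"
  assumes "lpmln_program \<Pi>"
    and "tight \<Pi>"
    and "SM' \<Pi> \<noteq> {}"
  shows "P_lpmln \<Pi> I = P_mln (Comp \<Pi>) I"
proof -
  have "finite \<Pi>"
    using assms(1) unfolding lpmln_program_def by simp
  with assms(2,3) show ?thesis
    by (simp add: P_lpmln_eq_P_soft P_mln_Comp_eq_P_soft)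
qed

end
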